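(* For every natural number $m>2$, $\mathrm{Log}_{=1}(\mathbb{R}^m)\not\subseteq\mathrm{Log}_{=1}(\mathbb{R}^2)$.
   Context: Modal formulas are built from a countable set of propositional variables using $\bot$, $\to$ and one unary modality $\lozenge$. A frame is a pair $(X,R)$; a valuation assigns subsets of $X$ to variables; $x\models\lozenge\varphi$ iff there is $y$ with $xRy$ and $y\models\varphi$. A formula is valid in a frame if true at every point under every valuation. For a metric space $(X,d)$, $\mathrm{Log}_{=1}(X)$ is the set of modal formulas valid in the frame $(X,R_{=1})$, where $xR_{=1}y$ iff $d(x,y)=1$. $\mathbb{R}^n$ carries the Euclidean metric. *)

theory Defs
  imports "HOL-Analysis.Analysis"
begin

datatype fm = Var nat | Bot | Imp fm fm | Dia fm

fun sat :: "'a set \<Rightarrow> ('a \<Rightarrow> 'a \<Rightarrow> bool) \<Rightarrow> (nat \<Rightarrow> 'a set) \<Rightarrow> 'a \<Rightarrow> fm \<Rightarrow> bool" where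
  "sat X R V x (Var p) = (x \<in> V p)"
| "sat X R V x Bot = False"
| "sat X R V x (Imp a b) = (sat X R V x a \<longrightarrow> sat X R V x b)"
| "sat X R V x (Dia a) = (\<exists>y\<in>X. R x y \<and> sat X R V y a)"

definition valid_frame :: "'a set \<Rightarrow> ('a \<Rightarrow> 'a \<Rightarrow> bool) \<Rightarrow> fm \<Rightarrow> bool" where
  "valid_frame X R \<phi> = (\<forall>V. (\<forall>p. V p \<subseteq> X) \<longrightarrow> (\<forall>x\<in>X. sat X R V x \<phi>))"

definition Log_eq1 :: "'a::metric_space set \<Rightarrow> fm set" where
  "Log_eq1 X = {\<phi>. valid_frame X (\<lambda>x y. dist x y = 1) \<phi>}"

end

theory Submission
  imports Defs
begin

text \<open>The formula \<open>\<box>q \<longrightarrow> \<diamond>(p \<and> \<diamond>(q \<and> p)) \<or> \<diamond>(\<not>p \<and> \<diamond>(q \<and> \<not>p))\<close> is valid in a frame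
  exactly when, at every point, the successors admit no 2-colouring without a monochromatic edge.
  For unit distance in dimension at least 3, every unit sphere contains an equilateral triangle
  of side 1, an odd cycle. On the unit circle of the plane, two points at distance 1 differ by a
  rotation through \<open>\<plusminus>60\<degree>\<close>, so colouring by the parity of the \<open>60\<degree>\<close> sector is proper.\<close>

definition Neg :: "fm \<Rightarrow> fm" where "Neg a = Imp a Bot"
definition Conj :: "fm \<Rightarrow> fm \<Rightarrow> fm" where "Conj a b = Neg (Imp a (Neg b))"
definition Disj :: "fm \<Rightarrow> fm \<Rightarrow> fm" where "Disj a b = Imp (Neg a) b"
definition Box :: "fm \<Rightarrow> fm" where "Box a = Neg (Dia (Neg a))"

lemma sat_Neg [simp]: "sat X R V x (Neg a) \<longleftrightarrow> \<not> sat X R V x a"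
  by (simp add: Neg_def)

lemma sat_Conj [simp]: "sat X R V x (Conj a b) \<longleftrightarrow> sat X R V x a \<and> sat X R V x b"
  by (simp add: Conj_def)

lemma sat_Disj [simp]: "sat X R V x (Disj a b) \<longleftrightarrow> sat X R V x a \<or> sat X R V x b"
  by (auto simp: Disj_def)

lemma sat_Box [simp]: "sat X R V x (Box a) \<longleftrightarrow> (\<forall>y\<in>X. R x y \<longrightarrow> sat X R V y a)"
  by (simp add: Box_def)

definition two_colourable :: "'a set \<Rightarrow> ('a \<Rightarrow> 'a \<Rightarrow> bool) \<Rightarrow> bool" where
  "two_colourable S R \<longleftrightarrow> (\<exists>C. \<forall>y\<in>S. \<forall>z\<in>S. R y z \<longrightarrow> (y \<in> C \<longleftrightarrow> z \<notin> C))"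

lemma triangle_not_two_colourable:
  assumes "a \<in> S" "b \<in> S" "c \<in> S" "R a b" "R a c" "R b c"
  shows "\<not> two_colourable S R"
  using assms unfolding two_colourable_def by blast

definition no_two_colouring_fm :: fm where
  "no_two_colouring_fm =
     Imp (Box (Var 1))
       (Disj (Dia (Conj (Var 0) (Dia (Conj (Var 1) (Var 0)))))
             (Dia (Conj (Neg (Var 0)) (Dia (Conj (Var 1) (Neg (Var 0)))))))"

text \<open>Read \<open>Var 1\<close> as the successors of the current point and \<open>Var 0\<close> as a colour class.\<close>
lemma valid_frame_no_two_colouring_fm_iff:
  "valid_frame X R no_two_colouring_fm \<longleftrightarrow> (\<forall>x\<in>X. \<not> two_colourable {y\<in>X. R x y} R)"
proof
  assume valid: "valid_frame X R no_two_colouring_fm"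
  show "\<forall>x\<in>X. \<not> two_colourable {y\<in>X. R x y} R"
  proof (intro ballI notI)
    fix x assume "x \<in> X" and "two_colourable {y\<in>X. R x y} R"
    then obtain C where C: "\<forall>y\<in>{y\<in>X. R x y}. \<forall>z\<in>{y\<in>X. R x y}. R y z \<longrightarrow> (y \<in> C \<longleftrightarrow> z \<notin> C)"
      unfolding two_colourable_def by blast
    define V where "V = (\<lambda>n::nat. if n = 0 then C \<inter> X else {y\<in>X. R x y})"
    have "\<forall>p. V p \<subseteq> X" by (auto simp: V_def)
    with valid \<open>x \<in> X\<close> have "sat X R V x no_two_colouring_fm"
      unfolding valid_frame_def by blast
    with C show False by (auto simp: no_two_colouring_fm_def V_def)
  qed
next
  assume not_colourable: "\<forall>x\<in>X. \<not> two_colourable {y\<in>X. R x y} R"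
  show "valid_frame X R no_two_colouring_fm"
    unfolding valid_frame_def
  proof (intro allI impI ballI)
    fix V :: "nat \<Rightarrow> 'a set" and x
    assume "\<forall>p. V p \<subseteq> X" and "x \<in> X"
    with not_colourable have "\<not> two_colourable {y\<in>X. R x y} R" by blast
    then obtain y z where "y \<in> X" "R x y" "z \<in> X" "R x z" "R y z" "y \<in> V 0 \<longleftrightarrow> z \<in> V 0"
      unfolding two_colourable_def by blast
    then show "sat X R V x no_two_colouring_fm"
      by (simp add: no_two_colouring_fm_def) blast
  qed
qed

lemma norm_add_Basis_Basis:
  fixes i j :: "'a::euclidean_space"
  assumes "i \<in> Basis" "j \<in> Basis" "i \<noteq> j"
  shows "norm (i + j) = sqrt 2" and "norm (i - j) = sqrt 2"
  using assms by (simp_all add: norm_eq_sqrt_inner inner_add_left inner_add_right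
      inner_diff_left inner_diff_right inner_not_same_Basis)

text \<open>The witnesses \<open>x + (e\<^sub>i + e\<^sub>j) / \<surd>2\<close> form, together with \<open>x\<close>, a regular tetrahedron.\<close>
lemma unit_triangle_on_unit_sphere:
  fixes x :: "'a::euclidean_space"
  assumes "DIM('a) \<ge> 3"
  obtains a b c where "dist x a = 1" "dist x b = 1" "dist x c = 1"
    and "dist a b = 1" "dist a c = 1" "dist b c = 1"
proof -
  obtain B :: "'a set" where "B \<subseteq> Basis" "card B = 3"
    using assms obtain_subset_with_card_n by metis
  then obtain i j k :: 'a where ijk: "i \<in> Basis" "j \<in> Basis" "k \<in> Basis" "i \<noteq> j" "j \<noteq> k" "i \<noteq> k"
    unfolding card_3_iff by (metis insert_subset)
  define t :: real where "t = 1 / sqrt 2"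
  have edge: "dist (x + t *\<^sub>R u) (x + t *\<^sub>R v) = 1" if "norm (u - v) = sqrt 2" for u v
    using that by (simp add: t_def dist_norm norm_minus_commute flip: scaleR_diff_right)
  have centre: "dist x (x + t *\<^sub>R u) = 1" if "norm u = sqrt 2" for u
    using edge[of 0 u] that by simp
  show ?thesis
  proof (rule that)
    show "dist x (x + t *\<^sub>R (i + j)) = 1" "dist x (x + t *\<^sub>R (i + k)) = 1"
      "dist x (x + t *\<^sub>R (j + k)) = 1"
      using ijk by (simp_all add: centre norm_add_Basis_Basis)
    show "dist (x + t *\<^sub>R (i + j)) (x + t *\<^sub>R (i + k)) = 1"
      by (rule edge) (simp add: ijk norm_add_Basis_Basis)
    show "dist (x + t *\<^sub>R (i + j)) (x + t *\<^sub>R (j + k)) = 1"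
      by (rule edge) (simp add: ijk norm_add_Basis_Basis)
    show "dist (x + t *\<^sub>R (i + k)) (x + t *\<^sub>R (j + k)) = 1"
      by (rule edge) (simp add: ijk norm_add_Basis_Basis)
  qed
qed

definition upper_half :: "complex \<Rightarrow> bool" where
  "upper_half z \<longleftrightarrow> Im z > 0 \<or> (Im z = 0 \<and> Re z > 0)"

lemma upper_half_uminus: "z \<noteq> 0 \<Longrightarrow> upper_half (- z) \<longleftrightarrow> \<not> upper_half z"
  by (auto simp: upper_half_def complex_eq_iff)

text \<open>True iff \<open>\<lfloor>3 arg z / \<pi>\<rfloor>\<close> is even (with \<open>arg z \<in> [0, 2\<pi>)\<close>), expressed by three
  half-plane tests.\<close>
definition sextant_parity :: "complex \<Rightarrow> bool" where
  "sextant_parity z \<longleftrightarrow>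
     upper_half z \<noteq> (upper_half (z / cis (pi / 3)) \<noteq> upper_half (z / cis (pi / 3) ^ 2))"

lemma sextant_parity_rotate:
  assumes "z \<noteq> 0"
  shows "sextant_parity (cis (pi / 3) * z) \<longleftrightarrow> \<not> sextant_parity z"
proof -
  let ?c = "cis (pi / 3)"
  have "?c * z = ?c ^ 3 * z / ?c ^ 2"
    by (simp add: power2_eq_square power3_eq_cube)
  also have "?c ^ 3 = -1"
    using Complex.DeMoivre[of "pi / 3" 3] by simp
  finally have "?c * z = - (z / ?c ^ 2)"
    by simp
  moreover have "z / ?c ^ 2 \<noteq> 0"
    using assms by simp
  moreover have "?c * z / ?c = z" "?c * z / ?c ^ 2 = z / ?c"
    by (simp_all add: power2_eq_square)
  ultimately show ?thesis
    unfolding sextant_parity_def by (simp add: upper_half_uminus) argo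
qed

lemma unit_triangle_rotation:
  fixes z w :: complex
  assumes "cmod z = 1" "cmod w = 1" "cmod (z - w) = 1"
  shows "w = cis (pi / 3) * z \<or> z = cis (pi / 3) * w"
proof -
  have "z \<noteq> 0"
    using assms(1) by auto
  define u where "u = w / z"
  have "w = u * z"
    using \<open>z \<noteq> 0\<close> by (simp add: u_def)
  have "cmod u = 1"
    using assms(1,2) by (simp add: u_def norm_divide)
  then have "(Re u)\<^sup>2 + (Im u)\<^sup>2 = 1"
    using cmod_power2[of u] by simp
  have "z - w = (1 - u) * z"
    using \<open>w = u * z\<close> by (simp add: algebra_simps)
  with assms(1,3) have "cmod (1 - u) = 1"
    by (simp add: norm_mult)
  then have "(1 - Re u)\<^sup>2 + (Im u)\<^sup>2 = 1"
    using cmod_power2[of "1 - u"] by simp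
  with \<open>(Re u)\<^sup>2 + (Im u)\<^sup>2 = 1\<close> have "Re u = 1 / 2"
    by (simp add: power2_eq_square algebra_simps)
  have "(Im u)\<^sup>2 = 1 - (Re u)\<^sup>2"
    using \<open>(Re u)\<^sup>2 + (Im u)\<^sup>2 = 1\<close> by simp
  then have "(Im u)\<^sup>2 = (sqrt 3 / 2)\<^sup>2"
    using \<open>Re u = 1 / 2\<close> by (simp add: power_divide)
  with \<open>Re u = 1 / 2\<close> have "u = cis (pi / 3) \<or> u = cnj (cis (pi / 3))"
    by (auto simp: complex_eq_iff cos_60 sin_60 power2_eq_iff)
  then show ?thesis
    using \<open>w = u * z\<close> by (auto simp: cis_cnj cis_mult)
qed

definition complex_of_vec2 :: "real ^ 2 \<Rightarrow> complex" where
  "complex_of_vec2 v = Complex (v $ 1) (v $ 2)"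

lemma norm_complex_of_vec2 [simp]: "cmod (complex_of_vec2 v) = norm v"
  by (simp add: complex_of_vec2_def complex_norm norm_vec_def L2_set_def sum_2)

lemma complex_of_vec2_diff [simp]:
  "complex_of_vec2 (v - w) = complex_of_vec2 v - complex_of_vec2 w"
  by (simp add: complex_of_vec2_def complex_eq_iff)

lemma two_colourable_unit_circle:
  "two_colourable (sphere (0 :: real ^ 2) 1) (\<lambda>v w. dist v w = 1)"
  unfolding two_colourable_def
proof (intro exI ballI impI)
  fix v w :: "real ^ 2"
  assume "v \<in> sphere 0 1" "w \<in> sphere 0 1" "dist v w = 1"
  then have "cmod (complex_of_vec2 v) = 1" "cmod (complex_of_vec2 w) = 1"
    "cmod (complex_of_vec2 v - complex_of_vec2 w) = 1"
    by (simp_all add: dist_norm flip: complex_of_vec2_diff)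
  then have "sextant_parity (complex_of_vec2 v) \<longleftrightarrow> \<not> sextant_parity (complex_of_vec2 w)"
    using unit_triangle_rotation sextant_parity_rotate by (metis norm_zero zero_neq_one)
  then show "v \<in> {v. sextant_parity (complex_of_vec2 v)} \<longleftrightarrow>
      w \<notin> {v. sextant_parity (complex_of_vec2 v)}"
    by simp
qed

lemma no_two_colouring_fm_in_Log_eq1:
  assumes "DIM('a::euclidean_space) \<ge> 3"
  shows "no_two_colouring_fm \<in> Log_eq1 (UNIV :: 'a set)"
  unfolding Log_eq1_def mem_Collect_eq valid_frame_no_two_colouring_fm_iff
proof
  fix x :: 'a
  obtain a b c where "dist x a = 1" "dist x b = 1" "dist x c = 1"
    and "dist a b = 1" "dist a c = 1" "dist b c = 1"
    using unit_triangle_on_unit_sphere assms by metis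
  then show "\<not> two_colourable {y \<in> UNIV. dist x y = 1} (\<lambda>x y. dist x y = 1)"
    by (intro triangle_not_two_colourable[of a _ b c]) auto
qed

lemma no_two_colouring_fm_notin_Log_eq1_plane:
  "no_two_colouring_fm \<notin> Log_eq1 (UNIV :: (real ^ 2) set)"
proof
  assume "no_two_colouring_fm \<in> Log_eq1 (UNIV :: (real ^ 2) set)"
  then have "\<not> two_colourable {y \<in> UNIV. dist (0 :: real ^ 2) y = 1} (\<lambda>x y. dist x y = 1)"
    unfolding Log_eq1_def mem_Collect_eq valid_frame_no_two_colouring_fm_iff by blast
  then show False
    using two_colourable_unit_circle by (simp add: sphere_def)
qed

theorem proposition3p12:
  assumes "CARD('m) > 2"
  shows "\<not> (Log_eq1 (UNIV :: (real ^ 'm) set) \<subseteq> Log_eq1 (UNIV :: (real ^ 2) set))"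
  using no_two_colouring_fm_in_Log_eq1[where 'a = "real ^ 'm"] assms
    no_two_colouring_fm_notin_Log_eq1_plane by auto

end
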